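(* Let $w_0\to w_1\to\dots\to w_t$ be a reduced computation (as defined in the context). If $|w_0|_{\mathcal{A}}<|w_1|_{\mathcal{A}}$, then $|w_{i-1}|_{\mathcal{A}}\le|w_i|_{\mathcal{A}}$ for all $1\le i\le t$.
   Context: Let $\mathcal{A}$ be a finite non-empty alphabet, $\mathcal{A}_1=\{a_1:a\in\mathcal{A}\}$ a disjoint copy of $\mathcal{A}$, and $\mathcal{B}=\{b_1,b_2\}$; let $F=F(\mathcal{A}_1\sqcup\mathcal{B})$ be the free group, whose elements are identified with reduced words. Let $D=4|\mathcal{A}|(|\mathcal{A}|+2)$, fix a bijection $\eta:(\mathcal{A}\sqcup\mathcal{B})\times\mathcal{A}\to\{1,\dots,D/4\}$, and for $y\in\mathcal{A}\sqcup\mathcal{B}$, $a\in\mathcal{A}$, with $k=\eta(y,a)$, put $v(y,a)=b_1^k(b_2b_1)^{D-2k}b_2^k$. For $y\in\mathcal{A}\sqcup\mathcal{B}$ let $\psi_y$ be the automorphism of $F$ fixing $b_1,b_2$ and sending $a_1\mapsto v(y,a)a_1$ for each $a\in\mathcal{A}$; let $u_y=b_i^{-1}$ if $y=b_i$ and $u_y=a_1^{-1}$ if $y=a\in\mathcal{A}$. For each $y$ there are two operations ("rules") $\theta_y,\theta_y^{-1}$ on $F$: $w\cdot\theta_y=\psi_y(w)u_y$ and $w\cdot\theta_y^{-1}=\psi_y^{-1}(wu_y^{-1})$ (products freely reduced); these are mutually inverse. A computation is a sequence $w_0,\dots,w_t\in F$ with $w_i=w_{i-1}\cdot\theta_{y_i}^{\varepsilon_i}$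 for some $y_i\in\mathcal{A}\sqcup\mathcal{B}$, $\varepsilon_i\in\{\pm1\}$; its history is the word $\theta_{y_1}^{\varepsilon_1}\cdots\theta_{y_t}^{\varepsilon_t}$, and the computation is reduced if this word is freely reduced (no consecutive $\theta_y^{\varepsilon}\theta_y^{-\varepsilon}$). (This describes computations of the machine $\mathbf{M}_1^{\mathcal{A}}$ in the base $Q_0Q_1$, with configuration $q_0wq_1$ identified with $w$.) For $w\in F$, $|w|_{\mathcal{A}}$ is the number of letters of $w$ from $\mathcal{A}_1^{\pm1}$. *)

theory Defs
  imports Main
begin

text \<open>Generators of F = F(A_1 \<union> B): a copy a_1 of each letter a of the alphabet 'a,
  plus b_1, b_2.  The same datatype also serves as the index set A \<union> B of the rules
  (the letter a \<in> A being identified with the constructor GA a).\<close>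
datatype 'a gen = GA 'a | GB1 | GB2

text \<open>A letter is a generator with an exponent flag: (g, False) = g, (g, True) = g^-1.\<close>
type_synonym 'a letter = "'a gen \<times> bool"

definition inv_letter :: "'a letter \<Rightarrow> 'a letter" where
  "inv_letter x = (fst x, \<not> snd x)"

fun red :: "'a letter list \<Rightarrow> 'a letter list" where
  "red [] = []"
| "red (x # xs) = (case red xs of [] \<Rightarrow> [x]
                     | y # ys \<Rightarrow> (if y = inv_letter x then ys else x # y # ys))"

definition reduced :: "'a letter list \<Rightarrow> bool" where
  "reduced w \<longleftrightarrow> (\<forall>i. Suc i < length w \<longrightarrow> w ! Suc i \<noteq> inv_letter (w ! i))"

definition fmult :: "'a letter list \<Rightarrow> 'a letter list \<Rightarrow> 'a letter list" where
  "fmult w v = red (w @ v)"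

definition finv :: "'a letter list \<Rightarrow> 'a letter list" where
  "finv w = rev (map inv_letter w)"

definition hom_ext :: "('a gen \<Rightarrow> 'a letter list) \<Rightarrow> 'a letter list \<Rightarrow> 'a letter list" where
  "hom_ext f w = red (concat (map (\<lambda>(g, e). if e then finv (f g) else f g) w))"

definition Dconst :: "'a::finite itself \<Rightarrow> nat" where
  "Dconst (_ :: 'a itself) = 4 * card (UNIV :: 'a set) * (card (UNIV :: 'a set) + 2)"

definition vword :: "('a::finite gen \<times> 'a \<Rightarrow> nat) \<Rightarrow> 'a gen \<Rightarrow> 'a \<Rightarrow> 'a letter list" where
  "vword eta y a = (let k = eta (y, a); D = Dconst TYPE('a) in
      replicate k (GB1, False) @ concat (replicate (D - 2 * k) [(GB2, False), (GB1, False)])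
      @ replicate k (GB2, False))"

definition psi :: "('a::finite gen \<times> 'a \<Rightarrow> nat) \<Rightarrow> 'a gen \<Rightarrow> 'a letter list \<Rightarrow> 'a letter list" where
  "psi eta y = hom_ext (\<lambda>g. case g of GA a \<Rightarrow> vword eta y a @ [(GA a, False)] | _ \<Rightarrow> [(g, False)])"

text \<open>psi_y^-1: fixes b_1, b_2 and a_1 \<mapsto> v(y,a)^-1 a_1 (v(y,a) is a word in b_1,b_2,
  which psi_y fixes, so this is the inverse automorphism).\<close>
definition psi_inv :: "('a::finite gen \<times> 'a \<Rightarrow> nat) \<Rightarrow> 'a gen \<Rightarrow> 'a letter list \<Rightarrow> 'a letter list" where
  "psi_inv eta y = hom_ext (\<lambda>g. case g of GA a \<Rightarrow> red (finv (vword eta y a) @ [(GA a, False)])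
                                  | _ \<Rightarrow> [(g, False)])"

definition uword :: "'a gen \<Rightarrow> 'a letter list" where
  "uword y = [(y, True)]"

text \<open>Rule application: (y, True) is theta_y, (y, False) is theta_y^-1.\<close>
definition apply_rule :: "('a::finite gen \<times> 'a \<Rightarrow> nat) \<Rightarrow> 'a gen \<times> bool \<Rightarrow> 'a letter list \<Rightarrow> 'a letter list" where
  "apply_rule eta r w = (if snd r then fmult (psi eta (fst r) w) (uword (fst r))
                         else psi_inv eta (fst r) (fmult w (finv (uword (fst r)))))"

definition is_computation :: "('a::finite gen \<times> 'a \<Rightarrow> nat) \<Rightarrow> 'a letter list list \<Rightarrow> ('a gen \<times> bool) list \<Rightarrow> bool" where
  "is_computation eta ws hs \<longleftrightarrow> length ws = Suc (length hs) \<and> reduced (ws ! 0) \<and>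
     (\<forall>i < length hs. ws ! Suc i = apply_rule eta (hs ! i) (ws ! i))"

definition reduced_history :: "('a gen \<times> bool) list \<Rightarrow> bool" where
  "reduced_history hs \<longleftrightarrow> (\<forall>i. Suc i < length hs \<longrightarrow> hs ! Suc i \<noteq> (fst (hs ! i), \<not> snd (hs ! i)))"

definition cntA :: "'a letter list \<Rightarrow> nat" where
  "cntA w = length (filter (\<lambda>x. case fst x of GA _ \<Rightarrow> True | _ \<Rightarrow> False) w)"

end

theory Submission
  imports Defs
begin

text \<open>
  Write a word as W a_1^{\<plusminus>1} T, where T is the b-word after its last A-letter.
  A rule theta_a^{\<plusminus>1} with a \<in> A either appends a letter a_1^{\<plusminus>1}, raising |w|_A by one, or
  cancels a final a_1^{\<minusplus>1}, lowering it by one. A rule theta_b^{\<plusminus>1} with b \<in> B keeps |w|_A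
  and replaces T by red(p T b^{\<plusminus>1}), where p = v(b,a)^{\<minusplus>1} if the last A-letter is a_1^{-1}
  and p is empty otherwise.

  Suppose |w|_A drops somewhere; take the first drop and the last increase before it. In between
  only B-rules act, along a reduced history R of length m, so right before the drop
  T = red(p_m \<cdots> p_1 R), and the drop needs T to be empty. If m = 0 the history contains
  theta_a^{\<plusminus>1} theta_a^{\<minusplus>1}. Otherwise consecutive factors p_{i+1} p_i cancel in at most D/4
  letters, since distinct y give distinct exponents eta(y,a), while every factor has length at
  least 3D/2. Hence red(p_m \<cdots> p_1) has length at least m D > m, and T is not empty.
\<close>

section \<open>Free reduction\<close>

definition cancel_cons :: "'a letter \<Rightarrow> 'a letter list \<Rightarrow> 'a letter list" where
  "cancel_cons x ys = (case ys of [] \<Rightarrow> [x] | y # ys' \<Rightarrow> (if y = inv_letter x then ys' else x # y # ys'))"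

lemma red_Cons: "red (x # xs) = cancel_cons x (red xs)"
  by (simp add: cancel_cons_def)

declare red.simps(2)[simp del]

lemma inv_letter_inv_letter [simp]: "inv_letter (inv_letter x) = x"
  by (simp add: inv_letter_def)

lemma inv_letter_eq_iff [simp]: "inv_letter x = inv_letter y \<longleftrightarrow> x = y"
  by (metis inv_letter_inv_letter)

lemma reduced_Nil [simp]: "reduced []"
  by (simp add: reduced_def)

lemma reduced_Cons: "reduced (x # ys) \<longleftrightarrow> reduced ys \<and> (ys \<noteq> [] \<longrightarrow> hd ys \<noteq> inv_letter x)"
  by (cases ys) (auto simp: reduced_def nth_Cons split: nat.splits)

lemma reduced_singleton [simp]: "reduced [x]"
  by (simp add: reduced_Cons)

lemma reduced_Cons_Cons [simp]: "reduced (x # y # ys) \<longleftrightarrow> y \<noteq> inv_letter x \<and> reduced (y # ys)"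
  by (subst reduced_Cons) auto

lemma reduced_append:
  "reduced (u @ v) \<longleftrightarrow> reduced u \<and> reduced v \<and> (u \<noteq> [] \<and> v \<noteq> [] \<longrightarrow> hd v \<noteq> inv_letter (last u))"
  by (induction u rule: induct_list012) (auto simp: reduced_Cons)

lemma reduced_appendD: "reduced (u @ v) \<Longrightarrow> reduced u" "reduced (u @ v) \<Longrightarrow> reduced v"
  by (simp_all add: reduced_append)

lemma reduced_take_drop: "reduced w \<Longrightarrow> reduced (take m (drop n w))"
  by (metis append_take_drop_id reduced_appendD)

lemma reduced_positive: "\<forall>x\<in>set w. \<not> snd x \<Longrightarrow> reduced w"
  unfolding reduced_def inv_letter_def by (metis Suc_lessD nth_mem snd_conv)

lemma reduced_red [simp]: "reduced (red w)"
  by (induction w) (auto simp: red_Cons cancel_cons_def reduced_Cons split: list.splits)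

lemma red_reduced: "reduced w \<Longrightarrow> red w = w"
  by (induction w) (auto simp: red_Cons cancel_cons_def reduced_Cons split: list.splits)

lemma red_singleton [simp]: "red [x] = [x]"
  by (simp add: red_reduced)

lemma red_red [simp]: "red (red w) = red w"
  by (simp add: red_reduced)

lemma cancel_cons_inv: "reduced w \<Longrightarrow> cancel_cons x (cancel_cons (inv_letter x) w) = w"
  by (cases w) (auto simp: cancel_cons_def reduced_Cons split: list.splits)

lemma red_append_red_right: "red (u @ red v) = red (u @ v)"
  by (induction u) (auto simp: red_Cons)

lemma red_cancel_cons_append: "red (cancel_cons x u @ v) = cancel_cons x (red (u @ v))"
proof (cases u)
  case (Cons y u')
  show ?thesis
  proof (cases "y = inv_letter x")
    case True
    then have "cancel_cons x (red (u @ v)) = cancel_cons x (cancel_cons (inv_letter x) (red (u' @ v)))"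
      using Cons by (simp add: red_Cons)
    also have "\<dots> = red (u' @ v)"
      by (simp add: cancel_cons_inv)
    finally show ?thesis
      using Cons True by (simp add: cancel_cons_def)
  qed (use Cons in \<open>simp add: cancel_cons_def red_Cons\<close>)
qed (simp add: cancel_cons_def red_Cons)

lemma red_append_red_left: "red (red u @ v) = red (u @ v)"
  by (induction u) (simp_all add: red_reduced red_Cons red_cancel_cons_append)

lemma red_append_red_middle: "red (u @ red v @ w) = red (u @ v @ w)"
  by (metis red_append_red_left red_append_red_right)

lemma red_snoc:
  "reduced u \<Longrightarrow> red (u @ [z]) = (if u \<noteq> [] \<and> last u = inv_letter z then butlast u else u @ [z])"
proof (induction u)
  case (Cons x u)
  then show ?case
    by (cases u rule: rev_cases)
      (auto simp: red_Cons cancel_cons_def reduced_Cons reduced_append hd_append split: list.splits)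
qed simp

lemma length_red: "length (red w) \<le> length w"
  by (induction w) (auto simp: red_Cons cancel_cons_def split: list.splits)

lemma set_red: "set (red w) \<subseteq> set w"
  by (induction w) (auto simp: red_Cons cancel_cons_def split: list.splits)

lemma finv_Nil [simp]: "finv [] = []"
  and finv_Cons [simp]: "finv (x # u) = finv u @ [inv_letter x]"
  and finv_append [simp]: "finv (u @ v) = finv v @ finv u"
  and length_finv [simp]: "length (finv u) = length u"
  and finv_eq_Nil_iff [simp]: "finv u = [] \<longleftrightarrow> u = []"
  by (simp_all add: finv_def)

lemma finv_finv [simp]: "finv (finv u) = u"
  by (induction u) auto

lemma finv_replicate [simp]: "finv (replicate n x) = replicate n (inv_letter x)"
  by (simp add: finv_def)

lemma last_finv: "u \<noteq> [] \<Longrightarrow> last (finv u) = inv_letter (hd u)"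
  by (cases u) auto

lemma reduced_finv: "reduced u \<Longrightarrow> reduced (finv u)"
  by (induction u) (auto simp: reduced_append reduced_Cons last_finv)

lemma red_cancel_left: "red (u @ finv u @ v) = red v"
proof (induction u arbitrary: v)
  case (Cons x u)
  have "red ((x # u) @ finv (x # u) @ v) = cancel_cons x (red (u @ finv u @ inv_letter x # v))"
    by (simp add: red_Cons)
  also have "\<dots> = red v"
    by (simp add: Cons red_Cons cancel_cons_inv)
  finally show ?case .
qed simp

lemma red_cancel_right: "red (v @ u @ finv u) = red v"
  by (metis append_Nil2 red_append_red_right red_cancel_left)

lemma red_append_finv [simp]: "red (u @ finv u) = []"
  using red_cancel_left[of u "[]"] by simp

lemma red_append_eq_Nil: "red (u @ v) = [] \<Longrightarrow> red u = red (finv v)"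
  by (metis append_assoc red_append_red_left red_cancel_right self_append_conv2)

lemma red_conj_eq_Nil:
  assumes "red (finv q @ t @ q) = []" "reduced t"
  shows "t = []"
proof -
  have "red ((finv q @ t) @ q) = []"
    using assms(1) by simp
  then have "red (finv q @ t) = red (finv q)"
    by (rule red_append_eq_Nil)
  then have "red (q @ red (finv q @ t)) = red (q @ red (finv q))"
    by simp
  then show ?thesis
    using assms(2) by (simp add: red_append_red_right red_cancel_left red_reduced)
qed

section \<open>Products with bounded cancellation\<close>

definition bounded_cancellation :: "nat \<Rightarrow> 'a letter list \<Rightarrow> 'a letter list \<Rightarrow> bool" where
  "bounded_cancellation Q u v \<longleftrightarrow> (\<exists>X Y Z. u = X @ Y \<and> v = finv Y @ Z \<and> length Y \<le> Q
     \<and> X \<noteq> [] \<and> Z \<noteq> [] \<and> hd Z \<noteq> inv_letter (last X))"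

lemma bounded_cancellationI:
  "u = X @ Y \<Longrightarrow> v = finv Y @ Z \<Longrightarrow> length Y \<le> Q \<Longrightarrow> X \<noteq> [] \<Longrightarrow> Z \<noteq> []
    \<Longrightarrow> hd Z \<noteq> inv_letter (last X) \<Longrightarrow> bounded_cancellation Q u v"
  unfolding bounded_cancellation_def by blast

lemma bounded_cancellation_no_cancel:
  "u \<noteq> [] \<Longrightarrow> v \<noteq> [] \<Longrightarrow> hd v \<noteq> inv_letter (last u) \<Longrightarrow> bounded_cancellation Q u v"
  by (rule bounded_cancellationI[of u u "[]" v v]) simp_all

lemma bounded_cancellation_replicate:
  assumes "A \<noteq> []" "C \<noteq> []" "last A \<noteq> y" "hd C \<noteq> inv_letter y" "k \<noteq> k'" "min k k' \<le> Q"
  shows "bounded_cancellation Q (A @ replicate k' y) (replicate k (inv_letter y) @ C)"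
proof (cases "k < k'")
  case True
  then have "replicate k' y = replicate (k' - k) y @ replicate k y"
    by (simp add: replicate_add[symmetric])
  then show ?thesis
    using assms True
    by (intro bounded_cancellationI[of _ "A @ replicate (k' - k) y" "replicate k y" _ C]) simp_all
next
  case False
  then have "replicate k (inv_letter y)
      = replicate k' (inv_letter y) @ replicate (k - k') (inv_letter y)"
    using assms(5) by (simp add: replicate_add[symmetric])
  then show ?thesis
    using assms False
    by (intro bounded_cancellationI[of _ A "replicate k' y" _ "replicate (k - k') (inv_letter y) @ C"])
      simp_all
qed

definition begins_with_but :: "nat \<Rightarrow> 'b list \<Rightarrow> 'b list \<Rightarrow> bool" where
  "begins_with_but Q p w \<longleftrightarrow> (\<exists>X Y s. p = X @ Y \<and> length Y \<le> Q \<and> w = X @ s)"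

lemma begins_with_but_refl [simp]: "begins_with_but Q p p"
  unfolding begins_with_but_def by force

lemma red_append_bounded_cancellation:
  assumes c: "bounded_cancellation Q u v" and u: "reduced u" and v: "2 * Q < length v"
    and w: "reduced w" "begins_with_but Q v w"
  shows "begins_with_but Q u (red (u @ w)) \<and> length u + length w \<le> length (red (u @ w)) + 2 * Q"
proof -
  obtain X Y Z where XYZ: "u = X @ Y" "v = finv Y @ Z" "length Y \<le> Q" "X \<noteq> []" "Z \<noteq> []"
      "hd Z \<noteq> inv_letter (last X)"
    using c unfolding bounded_cancellation_def by blast
  obtain X0 Y0 s where X0: "v = X0 @ Y0" "length Y0 \<le> Q" "w = X0 @ s"
    using w(2) unfolding begins_with_but_def by blast
  define Z0 where "Z0 = take (length X0 - length Y) Z"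
  have long: "length Y < length X0"
    using X0 XYZ(3) v by simp
  have "X0 = take (length X0) v"
    using X0(1) by simp
  also have "\<dots> = finv Y @ Z0"
    using XYZ(2) long by (simp add: Z0_def)
  finally have "X0 = finv Y @ Z0" .
  then have w_eq: "w = finv Y @ Z0 @ s"
    using X0(3) by simp
  have "Z0 \<noteq> []" "hd Z0 = hd Z"
    using long XYZ(5) by (simp_all add: Z0_def)
  moreover have "reduced X" "reduced (Z0 @ s)"
    using u w(1) XYZ(1) w_eq reduced_appendD by blast+
  ultimately have "reduced (X @ Z0 @ s)"
    using XYZ(6) by (simp add: reduced_append hd_append)
  moreover have "red (u @ w) = red (X @ red (Z0 @ s))"
    using XYZ(1) w_eq red_append_red_right[of X "Y @ finv Y @ Z0 @ s"] by (simp add: red_cancel_left)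
  ultimately have "red (u @ w) = X @ Z0 @ s"
    by (simp add: red_append_red_right red_reduced)
  then show ?thesis
    using XYZ(1,3) w_eq unfolding begins_with_but_def by auto
qed

lemma length_red_concat_rev_map:
  fixes p :: "'a letter \<Rightarrow> 'a letter list"
  assumes R: "reduced R" and "0 < D"
    and p: "\<And>h. h \<in> set R \<Longrightarrow> reduced (p h) \<and> D + 2 * Q \<le> length (p h)"
    and c: "\<And>h h'. h \<in> set R \<Longrightarrow> h' \<in> set R \<Longrightarrow> h' \<noteq> inv_letter h \<Longrightarrow> bounded_cancellation Q (p h') (p h)"
  shows "length R * D \<le> length (red (concat (rev (map p R))))"
proof -
  \<comment> \<open>The reduced product keeps all but at most Q letters of its leftmost factor, against
    which the next factor then cancels at most Q letters.\<close>
  have "R \<noteq> [] \<longrightarrow> begins_with_but Q (p (last R)) (red (concat (rev (map p R))))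
      \<and> length R * D \<le> length (red (concat (rev (map p R))))"
    using assms(1,3,4)
  proof (induction R rule: rev_induct)
    case (snoc h R)
    show ?case
    proof (cases "R = []")
      case True
      then show ?thesis
        using snoc.prems(2)[of h] by (simp add: red_reduced)
    next
      case False
      let ?L = "red (concat (rev (map p R)))"
      have IH: "begins_with_but Q (p (last R)) ?L" "length R * D \<le> length ?L"
        using snoc False by (auto simp: reduced_append)
      have "h \<noteq> inv_letter (last R)"
        using snoc.prems(1) False by (simp add: reduced_append hd_append)
      then have "bounded_cancellation Q (p h) (p (last R))"
        using snoc.prems(3) False by simp
      moreover have "reduced (p h)" "2 * Q < length (p (last R))"
        using snoc.prems(2)[of h] snoc.prems(2)[of "last R"] False \<open>0 < D\<close> by auto
      ultimately have "begins_with_but Q (p h) (red (p h @ ?L))"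
          "length (p h) + length ?L \<le> length (red (p h @ ?L)) + 2 * Q"
        using red_append_bounded_cancellation[of Q "p h" "p (last R)" ?L] IH(1) by simp_all
      then show ?thesis
        using IH(2) snoc.prems(2)[of h] by (simp add: red_append_red_right)
    qed
  qed simp
  then show ?thesis
    by (cases "R = []") simp_all
qed

section \<open>Letters from A and words in b_1, b_2\<close>

definition isA :: "'a letter \<Rightarrow> bool" where
  "isA x = (case fst x of GA _ \<Rightarrow> True | _ \<Rightarrow> False)"

definition b_word :: "'a letter list \<Rightarrow> bool" where
  "b_word t \<longleftrightarrow> (\<forall>x\<in>set t. \<not> isA x)"

lemma isA_simps [simp]: "isA (GA a, e)" "\<not> isA (GB1, e)" "\<not> isA (GB2, e)"
  by (simp_all add: isA_def)

lemma isA_iff: "isA x \<longleftrightarrow> (\<exists>a s. x = (GA a, s))"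
  by (cases x; rename_tac g e; case_tac g) auto

lemma isA_inv_letter [simp]: "isA (inv_letter x) = isA x"
  by (simp add: isA_def inv_letter_def)

lemma cntA_Nil [simp]: "cntA [] = 0"
  and cntA_Cons [simp]: "cntA (x # u) = (if isA x then Suc (cntA u) else cntA u)"
  and cntA_append [simp]: "cntA (u @ v) = cntA u + cntA v"
  by (simp_all add: cntA_def isA_def)

lemma cntA_b_word: "b_word t \<Longrightarrow> cntA t = 0"
  by (simp add: b_word_def cntA_def isA_def filter_empty_conv)

lemma b_word_Nil [simp]: "b_word []"
  and b_word_Cons [simp]: "b_word (x # u) \<longleftrightarrow> \<not> isA x \<and> b_word u"
  and b_word_append [simp]: "b_word (u @ v) \<longleftrightarrow> b_word u \<and> b_word v"
  and b_word_finv [simp]: "b_word (finv u) \<longleftrightarrow> b_word u"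
  by (auto simp: b_word_def finv_def)

lemma b_word_red: "b_word t \<Longrightarrow> b_word (red t)"
  using set_red by (auto simp: b_word_def)

lemma split_last_A: "\<not> b_word w \<Longrightarrow> \<exists>W a s t. w = W @ [(GA a, s)] @ t \<and> b_word t"
  using split_list_last_prop[of w isA] by (auto simp: b_word_def isA_iff)

lemma last_A_eq_snoc_A:
  "W @ [x] @ t = V @ [y] \<Longrightarrow> isA y \<Longrightarrow> b_word t \<Longrightarrow> t = [] \<and> W = V \<and> x = y"
  by (cases t rule: rev_cases) auto

lemma reduced_b_word_snoc_A:
  assumes "reduced t" "b_word t" "isA y"
  shows "reduced (t @ [y])"
proof -
  have "t \<noteq> [] \<Longrightarrow> y \<noteq> inv_letter (last t)"
    using last_in_set[of t] assms by (auto simp: b_word_def)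
  then show ?thesis
    using assms by (simp add: reduced_append)
qed

lemma reduced_snoc_A_append_b_word:
  assumes "reduced (W @ [x])" "isA x" "b_word t" "reduced t"
  shows "reduced (W @ [x] @ t)"
proof -
  have "t \<noteq> [] \<Longrightarrow> hd t \<noteq> inv_letter x"
    by (metis assms(2,3) b_word_def hd_in_set isA_inv_letter)
  then show ?thesis
    using assms reduced_append[of "W @ [x]" t] by simp
qed

lemma red_snoc_A_append_b_word:
  "reduced (W @ [x]) \<Longrightarrow> isA x \<Longrightarrow> b_word t \<Longrightarrow> red (W @ [x] @ t) = W @ [x] @ red t"
  by (metis append_assoc b_word_red red_append_red_right red_reduced reduced_red
      reduced_snoc_A_append_b_word)

lemma red_A_b_word_A:
  assumes P: "reduced P" "P \<noteq> [] \<Longrightarrow> isA (last P)" and B: "b_word B" and x: "isA x"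
    and C: "b_word C" "reduced C" and gap: "P \<noteq> [] \<Longrightarrow> red B = [] \<Longrightarrow> x \<noteq> inv_letter (last P)"
  shows "red (P @ B @ [x] @ C) = P @ red B @ [x] @ C"
proof -
  have PB: "reduced (P @ red B)"
  proof (cases "P = []")
    case False
    then obtain P' z where "P = P' @ [z]"
      by (cases P rule: rev_cases) auto
    then show ?thesis
      using reduced_snoc_A_append_b_word[of P' z "red B"] P B by (simp add: b_word_red)
  qed simp
  have "reduced ((P @ red B) @ [x])"
  proof (cases "red B = []")
    case True
    then show ?thesis
      using P gap by (simp add: reduced_append)
  next
    case False
    then have "x \<noteq> inv_letter (last (P @ red B))"
      using b_word_red[OF B] x last_in_set[of "red B"] by (auto simp: b_word_def)
    then show ?thesis
      by (subst reduced_append) (simp add: PB)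
  qed
  then have "reduced ((P @ red B) @ [x] @ C)"
    using x C by (intro reduced_snoc_A_append_b_word)
  then show ?thesis
    using red_append_red_middle[of P B "[x] @ C"] by (simp add: red_reduced)
qed

section \<open>Endomorphisms a_1 \<mapsto> q(a) a_1 fixing b_1, b_2\<close>

definition twist :: "('a \<Rightarrow> 'a letter list) \<Rightarrow> 'a gen \<Rightarrow> 'a letter list" where
  "twist q g = (case g of GA a \<Rightarrow> q a @ [(GA a, False)] | _ \<Rightarrow> [(g, False)])"

definition b_words :: "('a \<Rightarrow> 'a letter list) \<Rightarrow> bool" where
  "b_words q \<longleftrightarrow> (\<forall>a. reduced (q a) \<and> b_word (q a))"

definition twist_head :: "('a \<Rightarrow> 'a letter list) \<Rightarrow> 'a \<Rightarrow> bool \<Rightarrow> 'a letter list" where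
  "twist_head q a s = (if s then [] else q a)"

definition twist_tail :: "('a \<Rightarrow> 'a letter list) \<Rightarrow> 'a \<Rightarrow> bool \<Rightarrow> 'a letter list" where
  "twist_tail q a s = (if s then finv (q a) else [])"

lemma b_word_twist_head_tail:
  assumes "b_words q"
  shows "b_word (twist_head q a s)" "b_word (twist_tail q a s)" "reduced (twist_tail q a s)"
  using assms by (simp_all add: b_words_def twist_head_def twist_tail_def reduced_finv)

definition letter_image :: "('a gen \<Rightarrow> 'a letter list) \<Rightarrow> 'a letter \<Rightarrow> 'a letter list" where
  "letter_image f = (\<lambda>(g, e). if e then finv (f g) else f g)"

lemma hom_ext_letter_image: "hom_ext f w = red (concat (map (letter_image f) w))"
  by (simp add: hom_ext_def letter_image_def)

lemma hom_ext_append_letters: "hom_ext f (u @ v) = red (hom_ext f u @ concat (map (letter_image f) v))"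
  by (simp add: hom_ext_letter_image red_append_red_left)

lemma hom_ext_Nil [simp]: "hom_ext f [] = []"
  by (simp add: hom_ext_def)

lemma reduced_hom_ext: "reduced (hom_ext f w)"
  by (simp add: hom_ext_def)

lemma letter_image_twist_b: "\<not> isA z \<Longrightarrow> letter_image (twist q) z = [z]"
  by (cases z; rename_tac g e; case_tac g) (auto simp: letter_image_def twist_def inv_letter_def)

lemma letter_image_twist_A:
  "letter_image (twist q) (GA a, s) = twist_head q a s @ [(GA a, s)] @ twist_tail q a s"
  by (simp add: letter_image_def twist_def twist_head_def twist_tail_def inv_letter_def)

lemma concat_map_letter_image_twist_b_word: "b_word t \<Longrightarrow> concat (map (letter_image (twist q)) t) = t"
  by (induction t) (simp_all add: letter_image_twist_b)

lemma hom_ext_twist_b_word: "b_word w \<Longrightarrow> reduced w \<Longrightarrow> hom_ext (twist q) w = w"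
  by (simp add: hom_ext_letter_image concat_map_letter_image_twist_b_word red_reduced)

lemma hom_ext_twist_append_b_word_A:
  "b_word t \<Longrightarrow> hom_ext (twist q) (U @ t @ [(GA a, s)])
    = red (hom_ext (twist q) U @ t @ twist_head q a s @ [(GA a, s)] @ twist_tail q a s)"
  by (simp add: hom_ext_append_letters concat_map_letter_image_twist_b_word letter_image_twist_A)

lemma twist_gap_Nil_imp_not_inv:
  assumes q: "b_words q" and w: "reduced ((GA a0, s0) # t @ [(GA a, s)])" and t: "b_word t"
    and gap: "red (twist_tail q a0 s0 @ t @ twist_head q a s) = []"
  shows "(GA a, s) \<noteq> inv_letter (GA a0, s0)"
proof
  assume inv: "(GA a, s) = inv_letter (GA a0, s0)"
  then have a: "a = a0" "s = (\<not> s0)"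
    by (simp_all add: inv_letter_def)
  have "t \<noteq> []"
    using w inv by auto
  moreover have "reduced t"
    using w reduced_appendD[of "[(GA a0, s0)]" "t @ [(GA a, s)]"] reduced_appendD(1)[of t] by simp
  ultimately show False
    using gap red_conj_eq_Nil[of "q a" t] a
    by (cases s0) (simp_all add: twist_head_def twist_tail_def red_reduced)
qed

lemma hom_ext_twist_b_word_snoc_A:
  assumes q: "b_words q" and W: "b_word W" "reduced W"
  shows "hom_ext (twist q) (W @ [(GA a, s)]) = red (W @ twist_head q a s) @ [(GA a, s)] @ twist_tail q a s"
proof -
  have "hom_ext (twist q) (W @ [(GA a, s)])
      = red ([] @ (W @ twist_head q a s) @ [(GA a, s)] @ twist_tail q a s)"
    using hom_ext_twist_append_b_word_A[OF W(1), of q "[]" a s] by simp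
  also have "\<dots> = red (W @ twist_head q a s) @ [(GA a, s)] @ twist_tail q a s"
    using q W by (subst red_A_b_word_A) (simp_all add: b_word_twist_head_tail)
  finally show ?thesis .
qed

lemma hom_ext_twist_snoc_A:
  assumes q: "b_words q" and w: "reduced (W @ [(GA a, s)])"
  shows "\<exists>W'. hom_ext (twist q) (W @ [(GA a, s)]) = W' @ [(GA a, s)] @ twist_tail q a s \<and> cntA W' = cntA W"
  using w
proof (induction "length W" arbitrary: W a s rule: less_induct)
  case less
  let ?x = "(GA a, s)"
  show ?case
  proof (cases "b_word W")
    case True
    then show ?thesis
      using hom_ext_twist_b_word_snoc_A[OF q True reduced_appendD(1)[OF less.prems]] q
      by (simp add: cntA_b_word b_word_red b_word_twist_head_tail)
  next
    case False
    then obtain W0 a0 s0 t0 where W: "W = W0 @ [(GA a0, s0)] @ t0" and t0: "b_word t0"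
      using split_last_A by blast
    let ?z = "(GA a0, s0)" and ?B = "twist_tail q a0 s0 @ t0 @ twist_head q a s"
    have "reduced (W0 @ [?z])" "length W0 < length W"
      using less.prems W reduced_appendD(1)[of "W0 @ [?z]"] by simp_all
    then obtain W0' where W0': "hom_ext (twist q) (W0 @ [?z]) = W0' @ [?z] @ twist_tail q a0 s0"
        "cntA W0' = cntA W0"
      using less.hyps by blast
    have "hom_ext (twist q) (W @ [?x]) = red ((W0' @ [?z]) @ ?B @ [?x] @ twist_tail q a s)"
      using hom_ext_twist_append_b_word_A[OF t0, of q "W0 @ [?z]" a s] W W0'(1) by simp
    also have "\<dots> = (W0' @ [?z]) @ red ?B @ [?x] @ twist_tail q a s"
    proof (rule red_A_b_word_A)
      show "reduced (W0' @ [?z])"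
        using reduced_hom_ext[of "twist q" "W0 @ [?z]"] W0'(1) reduced_appendD(1)[of "W0' @ [?z]"] by simp
      have "reduced (?z # t0 @ [?x])"
        using less.prems W reduced_appendD(2)[of W0 "?z # t0 @ [?x]"] by simp
      then show "?x \<noteq> inv_letter (last (W0' @ [?z]))" if "red ?B = []"
        using twist_gap_Nil_imp_not_inv[OF q _ t0 that] by simp
    qed (use q t0 in \<open>simp_all add: b_word_twist_head_tail\<close>)
    finally show ?thesis
      using W t0 W0'(2) q by (intro exI[of _ "W0' @ [?z] @ red ?B"])
        (simp add: cntA_b_word b_word_red b_word_twist_head_tail)
  qed
qed

lemma hom_ext_twist_last_A:
  assumes q: "b_words q" and w: "reduced (W @ [(GA a, s)] @ t)" and t: "b_word t"
  shows "\<exists>W'. hom_ext (twist q) (W @ [(GA a, s)] @ t)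
      = W' @ [(GA a, s)] @ red (twist_tail q a s @ t) \<and> cntA W' = cntA W"
proof -
  let ?x = "(GA a, s)"
  have "reduced (W @ [?x])"
    using w reduced_appendD(1)[of "W @ [?x]" t] by simp
  then obtain W' where W': "hom_ext (twist q) (W @ [?x]) = W' @ [?x] @ twist_tail q a s" "cntA W' = cntA W"
    using hom_ext_twist_snoc_A[OF q] by blast
  have "reduced (W' @ [?x])"
    using reduced_hom_ext[of "twist q" "W @ [?x]"] W'(1) reduced_appendD(1)[of "W' @ [?x]"] by simp
  then have "red (W' @ [?x] @ (twist_tail q a s @ t)) = W' @ [?x] @ red (twist_tail q a s @ t)"
    using q t by (intro red_snoc_A_append_b_word) (simp_all add: b_word_twist_head_tail)
  moreover have "hom_ext (twist q) (W @ [?x] @ t) = red (W' @ [?x] @ twist_tail q a s @ t)"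
    using hom_ext_append_letters[of "twist q" "W @ [?x]" t] W'(1) t
    by (simp add: concat_map_letter_image_twist_b_word)
  ultimately show ?thesis
    using W'(2) by auto
qed

lemma cntA_hom_ext_twist:
  assumes q: "b_words q" and w: "reduced w"
  shows "cntA (hom_ext (twist q) w) = cntA w"
proof (cases "b_word w")
  case False
  then obtain W a s t where w_eq: "w = W @ [(GA a, s)] @ t" and t: "b_word t"
    using split_last_A by blast
  then obtain W' where "hom_ext (twist q) w = W' @ [(GA a, s)] @ red (twist_tail q a s @ t)"
      "cntA W' = cntA W"
    using hom_ext_twist_last_A[OF q] w by blast
  then show ?thesis
    using w_eq t q by (simp add: cntA_b_word b_word_red b_word_twist_head_tail)
qed (simp add: hom_ext_twist_b_word w)

lemma hom_ext_twist_eq_snoc_pos_A: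
  assumes q: "b_words q" and w: "reduced w" and img: "hom_ext (twist q) w = V @ [(GA a, False)]"
  shows "\<exists>W. w = W @ [(GA a, False)]"
proof (cases "b_word w")
  case True
  then show ?thesis
    using img w by (simp add: hom_ext_twist_b_word)
next
  case False
  then obtain W b s t where w_eq: "w = W @ [(GA b, s)] @ t" and t: "b_word t"
    using split_last_A by blast
  then obtain W' where W': "hom_ext (twist q) w = W' @ [(GA b, s)] @ red (twist_tail q b s @ t)"
    using hom_ext_twist_last_A[OF q] w by blast
  have "b_word (red (twist_tail q b s @ t))"
    using q t by (simp add: b_word_red b_word_twist_head_tail)
  then have "red (twist_tail q b s @ t) = [] \<and> (GA b, s) = (GA a, False)"
    using last_A_eq_snoc_A[of W' "(GA b, s)"] W' img by (metis isA_simps(1))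
  moreover have "reduced t"
    using w w_eq reduced_appendD(2) by metis
  ultimately show ?thesis
    using w_eq by (auto simp: twist_tail_def red_reduced)
qed

section \<open>The rules theta_y\<close>

lemma b_words_vword: "b_words (vword eta y)"
proof -
  have "set (vword eta y a) \<subseteq> {(GB1, False), (GB2, False)}" for a
    by (auto simp: vword_def Let_def)
  then show ?thesis
    unfolding b_words_def b_word_def by (fastforce intro: reduced_positive)
qed

lemma b_words_finv_vword: "b_words (\<lambda>a. finv (vword eta y a))"
  using b_words_vword[of eta y] by (simp add: b_words_def reduced_finv)

lemma psi_eq_twist: "psi eta y = hom_ext (twist (vword eta y))"
  unfolding psi_def twist_def[abs_def] ..

lemma psi_inv_eq_twist: "psi_inv eta y = hom_ext (twist (\<lambda>a. finv (vword eta y a)))"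
proof -
  have "red (finv (vword eta y a) @ [(GA a, False)]) = finv (vword eta y a) @ [(GA a, False)]" for a
    using b_words_finv_vword[of eta y] by (simp add: b_words_def red_reduced reduced_b_word_snoc_A)
  then show ?thesis
    unfolding psi_inv_def twist_def[abs_def]
    by (intro arg_cong[where f = hom_ext] ext) (simp split: gen.split)
qed

lemma apply_rule_True: "apply_rule eta (y, True) w = red (psi eta y w @ [(y, True)])"
  by (simp add: apply_rule_def fmult_def uword_def)

lemma apply_rule_False: "apply_rule eta (y, False) w = psi_inv eta y (red (w @ [(y, False)]))"
  by (simp add: apply_rule_def fmult_def uword_def inv_letter_def)

lemma reduced_apply_rule: "reduced (apply_rule eta h w)"
  by (simp add: apply_rule_def fmult_def psi_inv_def hom_ext_def)

lemma reduced_psi: "reduced (psi eta y w)"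
  by (simp add: psi_eq_twist reduced_hom_ext)

lemma cntA_psi: "reduced w \<Longrightarrow> cntA (psi eta y w) = cntA w"
  by (simp add: psi_eq_twist cntA_hom_ext_twist b_words_vword)

lemma cntA_psi_inv: "reduced w \<Longrightarrow> cntA (psi_inv eta y w) = cntA w"
  by (simp add: psi_inv_eq_twist cntA_hom_ext_twist b_words_finv_vword)

lemma cntA_red_snoc_b:
  assumes "reduced u" "\<not> isA h"
  shows "cntA (red (u @ [h])) = cntA u"
proof (cases "u \<noteq> [] \<and> last u = inv_letter h")
  case True
  then have "cntA u = cntA (butlast u) + cntA [last u]"
    by (metis append_butlast_last_id cntA_append)
  then show ?thesis
    using True assms by (simp add: red_snoc)
qed (use assms in \<open>auto simp: red_snoc\<close>)

lemma cntA_apply_rule_b: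
  assumes "\<not> isA h" "reduced w"
  shows "cntA (apply_rule eta h w) = cntA w"
proof (cases h)
  case (Pair y e)
  show ?thesis
  proof (cases e)
    case True
    then show ?thesis
      using assms Pair cntA_red_snoc_b[of "psi eta y w" h]
      by (simp add: apply_rule_True cntA_psi reduced_psi)
  next
    case False
    then show ?thesis
      using assms Pair cntA_red_snoc_b[of w h] by (simp add: apply_rule_False cntA_psi_inv)
  qed
qed

definition appends_or_cancels :: "'a letter \<Rightarrow> 'a letter list \<Rightarrow> 'a letter list \<Rightarrow> bool" where
  "appends_or_cancels h w w' \<longleftrightarrow>
     (\<exists>W. w' = W @ [h] \<and> cntA w' = Suc (cntA w)) \<or> (\<exists>W. w = W @ [inv_letter h] \<and> Suc (cntA w') = cntA w)"

lemma appends_or_cancels_theta_A: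
  assumes w: "reduced w"
  shows "appends_or_cancels (GA c, True) w (apply_rule eta (GA c, True) w)"
proof -
  let ?p = "psi eta (GA c) w"
  have p: "reduced ?p" "cntA ?p = cntA w"
    using w by (simp_all add: reduced_psi cntA_psi)
  show ?thesis
  proof (cases "?p \<noteq> [] \<and> last ?p = (GA c, False)")
    case True
    then obtain P where p_eq: "?p = P @ [(GA c, False)]"
      by (metis append_butlast_last_id)
    then obtain W where "w = W @ [(GA c, False)]"
      using hom_ext_twist_eq_snoc_pos_A[OF b_words_vword w] by (metis psi_eq_twist)
    moreover have "apply_rule eta (GA c, True) w = P"
      using p p_eq red_snoc[of ?p "(GA c, True)"] by (simp add: apply_rule_True inv_letter_def)
    ultimately show ?thesis
      using p p_eq by (simp add: appends_or_cancels_def inv_letter_def)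
  next
    case False
    then have "apply_rule eta (GA c, True) w = ?p @ [(GA c, True)]"
      using p by (auto simp: apply_rule_True red_snoc inv_letter_def)
    then show ?thesis
      using p by (simp add: appends_or_cancels_def)
  qed
qed

lemma appends_or_cancels_theta_inv_A:
  assumes w: "reduced w"
  shows "appends_or_cancels (GA c, False) w (apply_rule eta (GA c, False) w)"
proof (cases "w \<noteq> [] \<and> last w = (GA c, True)")
  case True
  then obtain W where w_eq: "w = W @ [(GA c, True)]"
    by (metis append_butlast_last_id)
  have "apply_rule eta (GA c, False) w = psi_inv eta (GA c) W"
    using w w_eq red_snoc[of w "(GA c, False)"] by (simp add: apply_rule_False inv_letter_def)
  moreover have "reduced W"
    using w w_eq reduced_appendD(1) by blast
  ultimately show ?thesis
    using w_eq by (simp add: appends_or_cancels_def cntA_psi_inv inv_letter_def)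
next
  case False
  then have "apply_rule eta (GA c, False) w = psi_inv eta (GA c) (w @ [(GA c, False)])"
    using w by (auto simp: apply_rule_False red_snoc inv_letter_def)
  moreover have "reduced (w @ [(GA c, False)])"
    using False w by (auto simp: reduced_append inv_letter_def prod_eq_iff)
  ultimately obtain W' where "apply_rule eta (GA c, False) w = W' @ [(GA c, False)]" "cntA W' = cntA w"
    using hom_ext_twist_snoc_A[OF b_words_finv_vword[of eta "GA c"], of w c False]
    by (auto simp: psi_inv_eq_twist twist_tail_def)
  then show ?thesis
    by (simp add: appends_or_cancels_def)
qed

lemma appends_or_cancels_apply_rule_A:
  assumes "reduced w" "isA h"
  shows "appends_or_cancels h w (apply_rule eta h w)"
proof -
  obtain c e where "h = (GA c, e)"
    using assms(2) unfolding isA_iff by blast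
  then show ?thesis
    using appends_or_cancels_theta_A[OF assms(1)] appends_or_cancels_theta_inv_A[OF assms(1)]
    by (cases e) simp_all
qed

lemma apply_rule_increase:
  assumes "reduced w" "cntA w < cntA (apply_rule eta h w)"
  shows "\<exists>W. apply_rule eta h w = W @ [h] \<and> isA h"
  using assms appends_or_cancels_apply_rule_A[of w h eta] cntA_apply_rule_b[of h w eta]
  by (fastforce simp: appends_or_cancels_def)

lemma apply_rule_decrease:
  assumes "reduced w" "cntA (apply_rule eta h w) < cntA w"
  shows "\<exists>W. w = W @ [inv_letter h] \<and> isA h"
  using assms appends_or_cancels_apply_rule_A[of w h eta] cntA_apply_rule_b[of h w eta]
  by (fastforce simp: appends_or_cancels_def)

lemma apply_rule_cntA_eq:
  assumes "reduced w" "cntA (apply_rule eta h w) = cntA w"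
  shows "\<not> isA h"
  using assms appends_or_cancels_apply_rule_A[of w h eta] by (auto simp: appends_or_cancels_def)

definition v_factor :: "('a::finite gen \<times> 'a \<Rightarrow> nat) \<Rightarrow> 'a \<Rightarrow> 'a letter \<Rightarrow> 'a letter list" where
  "v_factor eta a h = (if snd h then finv (vword eta (fst h) a) else vword eta (fst h) a)"

lemma b_word_v_factor: "b_word (v_factor eta a h)"
  using b_words_vword[of eta "fst h"] by (simp add: v_factor_def b_words_def)

lemma reduced_v_factor: "reduced (v_factor eta a h)"
  using b_words_vword[of eta "fst h"] by (simp add: v_factor_def b_words_def reduced_finv)

lemma apply_rule_b_last_A:
  assumes h: "\<not> isA h" and w: "reduced (W @ [(GA a, s)] @ t)" and t: "b_word t"
  shows "\<exists>W'. apply_rule eta h (W @ [(GA a, s)] @ t)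
      = W' @ [(GA a, s)] @ red ((if s then v_factor eta a h else []) @ t @ [h])"
proof (cases h)
  case (Pair y e)
  let ?x = "(GA a, s)"
  show ?thesis
  proof (cases e)
    case True
    let ?T = "red (twist_tail (vword eta y) a s @ t)"
    obtain W' where W': "psi eta y (W @ [?x] @ t) = W' @ [?x] @ ?T"
      using hom_ext_twist_last_A[OF b_words_vword w t] by (auto simp: psi_eq_twist)
    have "reduced (W' @ [?x])"
      using reduced_psi[of eta y "W @ [?x] @ t"] W' reduced_appendD(1)[of "W' @ [?x]"] by simp
    then have "red (W' @ [?x] @ (?T @ [h])) = W' @ [?x] @ red (?T @ [h])"
      using h t b_words_vword[of eta y]
      by (intro red_snoc_A_append_b_word) (simp_all add: b_word_red b_word_twist_head_tail)
    then show ?thesis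
      using W' Pair True by (auto simp: apply_rule_True v_factor_def twist_tail_def red_append_red_left)
  next
    case False
    have W: "reduced (W @ [?x])"
      using w reduced_appendD(1)[of "W @ [?x]"] by simp
    then have "red (W @ [?x] @ (t @ [h])) = W @ [?x] @ red (t @ [h])"
      using h t by (intro red_snoc_A_append_b_word) simp_all
    moreover have "reduced (W @ [?x] @ red (t @ [h]))"
      using W h t by (intro reduced_snoc_A_append_b_word) (simp_all add: b_word_red)
    ultimately obtain W' where "apply_rule eta h (W @ [?x] @ t)
        = W' @ [?x] @ red (twist_tail (\<lambda>a. finv (vword eta y a)) a s @ red (t @ [h]))"
      using hom_ext_twist_last_A[OF b_words_finv_vword, of W a s "red (t @ [h])" eta y] h t Pair False
      by (auto simp: apply_rule_False psi_inv_eq_twist b_word_red)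
    then show ?thesis
      using Pair False by (auto simp: v_factor_def twist_tail_def red_append_red_right)
  qed
qed

definition b_suffix :: "('a::finite gen \<times> 'a \<Rightarrow> nat) \<Rightarrow> 'a \<Rightarrow> bool \<Rightarrow> 'a letter list \<Rightarrow> 'a letter list" where
  "b_suffix eta a s R = red (concat (rev (map (\<lambda>h. if s then v_factor eta a h else []) R)) @ R)"

lemma b_suffix_Nil [simp]: "b_suffix eta a s [] = []"
  by (simp add: b_suffix_def)

lemma b_suffix_snoc:
  "b_suffix eta a s (R @ [h]) = red ((if s then v_factor eta a h else []) @ b_suffix eta a s R @ [h])"
  by (simp add: b_suffix_def red_append_red_middle)

lemma b_word_b_suffix:
  assumes "b_word R"
  shows "b_word (b_suffix eta a s R)"
proof -
  have "b_word (concat (rev (map (\<lambda>h. if s then v_factor eta a h else []) R)))"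
    by (induction R) (simp_all add: b_word_v_factor)
  then show ?thesis
    using assms by (simp add: b_suffix_def b_word_red)
qed

lemma reduced_fold_apply_rule: "reduced w \<Longrightarrow> reduced (fold (apply_rule eta) R w)"
  by (induction R arbitrary: w) (simp_all add: reduced_apply_rule)

lemma fold_apply_rule_b_word:
  assumes w: "reduced (W @ [(GA a, s)])" and R: "b_word R"
  shows "\<exists>W'. fold (apply_rule eta) R (W @ [(GA a, s)]) = W' @ [(GA a, s)] @ b_suffix eta a s R"
  using R
proof (induction R rule: rev_induct)
  case (snoc h R)
  then obtain W' where
    W': "fold (apply_rule eta) R (W @ [(GA a, s)]) = W' @ [(GA a, s)] @ b_suffix eta a s R"
    by auto
  moreover have "reduced (W' @ [(GA a, s)] @ b_suffix eta a s R)"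
    using reduced_fold_apply_rule[OF w, of eta R] W' by simp
  ultimately show ?case
    using apply_rule_b_last_A[of h W' a s "b_suffix eta a s R" eta] snoc.prems
    by (simp add: b_suffix_snoc b_word_b_suffix)
qed simp

section \<open>Computations\<close>

lemma increase_flat_decrease:
  fixes c :: "nat \<Rightarrow> nat"
  assumes "c 0 < c 1" "c (Suc j) < c j"
  shows "\<exists>i k. i < k \<and> k \<le> j \<and> c i < c (Suc i) \<and> (\<forall>l. i < l \<and> l < k \<longrightarrow> c (Suc l) = c l)
    \<and> c (Suc k) < c k"
proof -
  define k where "k = (LEAST k. c (Suc k) < c k)"
  have k: "c (Suc k) < c k" "k \<le> j"
    unfolding k_def using assms(2) by (auto intro: LeastI Least_le)
  have no_decrease: "c l \<le> c (Suc l)" if "l < k" for l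
    using not_less_Least[of l "\<lambda>k. c (Suc k) < c k"] that by (simp add: k_def)
  have "0 < k"
    using k(1) assms(1) by (cases k) auto
  define i where "i = (GREATEST i. i < k \<and> c i < c (Suc i))"
  have i: "i < k" "c i < c (Suc i)"
    using GreatestI_nat[of "\<lambda>i. i < k \<and> c i < c (Suc i)" 0 k] \<open>0 < k\<close> assms(1) by (auto simp: i_def)
  have "c (Suc l) = c l" if "i < l" "l < k" for l
  proof -
    have "\<not> c l < c (Suc l)"
      using Greatest_le_nat[of "\<lambda>i. i < k \<and> c i < c (Suc i)" l k] that by (auto simp: i_def)
    then show ?thesis
      using no_decrease[OF that(2)] by simp
  qed
  then show ?thesis
    using i k by blast
qed

lemma reduced_history_iff_reduced: "reduced_history hs \<longleftrightarrow> reduced hs"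
  by (simp add: reduced_history_def reduced_def inv_letter_def)

lemma is_computation_step:
  "is_computation eta ws hs \<Longrightarrow> n < length hs \<Longrightarrow> ws ! Suc n = apply_rule eta (hs ! n) (ws ! n)"
  by (simp add: is_computation_def)

lemma is_computation_fold:
  assumes ws: "is_computation eta ws hs" and "i + m \<le> length hs"
  shows "ws ! (i + m) = fold (apply_rule eta) (take m (drop i hs)) (ws ! i)"
  using assms(2)
proof (induction m)
  case (Suc m)
  then have "take (Suc m) (drop i hs) = take m (drop i hs) @ [hs ! (i + m)]"
    by (simp add: take_Suc_conv_app_nth)
  then show ?case
    using Suc is_computation_step[OF ws] by simp
qed simp

lemma is_computation_reduced:
  assumes "is_computation eta ws hs" "i \<le> length hs"
  shows "reduced (ws ! i)"
proof -
  have "reduced (ws ! 0)"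
    using assms(1) by (simp add: is_computation_def)
  then show ?thesis
    using is_computation_fold[OF assms(1), of 0 i] assms(2) reduced_fold_apply_rule by simp
qed

lemma b_word_flat_segment:
  assumes ws: "is_computation eta ws hs" and k: "k \<le> length hs"
    and flat: "\<forall>l. i < l \<and> l < k \<longrightarrow> cntA (ws ! Suc l) = cntA (ws ! l)"
  shows "b_word (take (k - Suc i) (drop (Suc i) hs))"
  unfolding b_word_def
proof
  fix h
  assume "h \<in> set (take (k - Suc i) (drop (Suc i) hs))"
  then obtain n where n: "n < k - Suc i" "h = hs ! (Suc i + n)"
    using k by (auto simp: in_set_conv_nth)
  then have "cntA (ws ! Suc (Suc i + n)) = cntA (ws ! (Suc i + n))"
    using flat by simp
  then have "cntA (apply_rule eta h (ws ! (Suc i + n))) = cntA (ws ! (Suc i + n))"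
    using is_computation_step[OF ws, of "Suc i + n"] n k by simp
  moreover have "reduced (ws ! (Suc i + n))"
    using is_computation_reduced[OF ws, of "Suc i + n"] n k by simp
  ultimately show "\<not> isA h"
    by (rule apply_rule_cntA_eq[rotated])
qed

section \<open>The words v(y, a)\<close>

abbreviation B1 :: "'a letter" where "B1 \<equiv> (GB1, False)"

abbreviation B2 :: "'a letter" where "B2 \<equiv> (GB2, False)"

definition vblock :: "nat \<Rightarrow> nat \<Rightarrow> 'a letter list" where
  "vblock k D = replicate k B1 @ concat (replicate (D - 2 * k) [B2, B1]) @ replicate k B2"

lemma vword_eq_vblock: "vword eta y (a :: 'a::finite) = vblock (eta (y, a)) (Dconst TYPE('a))"
  by (simp add: vword_def vblock_def Let_def)

lemma length_vblock: "length (vblock k D) = 2 * k + 2 * (D - 2 * k)"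
  by (induction "D - 2 * k") (simp_all add: vblock_def length_concat sum_list_replicate)

lemma concat_replicate_commute: "concat (replicate n u) @ u = u @ concat (replicate n u)"
  by (induction n) simp_all

lemma finv_concat_replicate: "finv (concat (replicate n u)) = concat (replicate n (finv u))"
  by (induction n) (simp_all add: concat_replicate_commute)

lemma finv_vblock:
  "finv (vblock k D) = replicate k (inv_letter B2)
     @ concat (replicate (D - 2 * k) [inv_letter B1, inv_letter B2])
     @ replicate k (inv_letter B1)"
  by (simp add: vblock_def finv_concat_replicate)

lemma hd_concat_replicate_pair: "0 < n \<Longrightarrow> hd (concat (replicate n [x, y])) = x"
  by (cases n) simp_all

lemma last_concat_replicate_pair: "0 < n \<Longrightarrow> last (concat (replicate n [x, y])) = y"
  by (induction n) auto

lemma bounded_cancellation_vblock_vblock: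
  "1 \<le> k \<Longrightarrow> 1 \<le> k' \<Longrightarrow> bounded_cancellation Q (vblock k' D) (vblock k D)"
  by (rule bounded_cancellation_no_cancel) (auto simp: vblock_def inv_letter_def hd_append)

lemma bounded_cancellation_finv_vblock_finv_vblock:
  "1 \<le> k \<Longrightarrow> 1 \<le> k' \<Longrightarrow> bounded_cancellation Q (finv (vblock k' D)) (finv (vblock k D))"
  by (rule bounded_cancellation_no_cancel) (auto simp: finv_vblock inv_letter_def hd_append)

lemma bounded_cancellation_vblock_finv_vblock:
  assumes "k \<noteq> k'" "k \<le> Q" "2 * k < D" "2 * k' < D"
  shows "bounded_cancellation Q (vblock k' D) (finv (vblock k D))"
proof -
  have u: "vblock k' D = (replicate k' B1 @ concat (replicate (D - 2 * k') [B2, B1])) @ replicate k' B2"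
    by (simp add: vblock_def)
  have v: "finv (vblock k D)
      = replicate k (inv_letter B2) @ (concat (replicate (D - 2 * k) [inv_letter B1, inv_letter B2])
        @ replicate k (inv_letter B1))"
    by (simp add: finv_vblock)
  show ?thesis
    unfolding u v using assms
    by (intro bounded_cancellation_replicate)
      (auto simp: hd_concat_replicate_pair last_concat_replicate_pair hd_append inv_letter_def)
qed

lemma bounded_cancellation_finv_vblock_vblock:
  assumes "k \<noteq> k'" "k \<le> Q" "2 * k < D" "2 * k' < D"
  shows "bounded_cancellation Q (finv (vblock k' D)) (vblock k D)"
proof -
  have u: "finv (vblock k' D) = (replicate k' (inv_letter B2)
      @ concat (replicate (D - 2 * k') [inv_letter B1, inv_letter B2])) @ replicate k' (inv_letter B1)"
    by (simp add: finv_vblock)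
  have v: "vblock k D = replicate k (inv_letter (inv_letter B1))
      @ (concat (replicate (D - 2 * k) [B2, B1]) @ replicate k B2)"
    by (simp add: vblock_def)
  show ?thesis
    unfolding u v using assms
    by (intro bounded_cancellation_replicate)
      (auto simp: hd_concat_replicate_pair last_concat_replicate_pair hd_append inv_letter_def)
qed

lemma Dconst_eq: "Dconst TYPE('a::finite) = 4 * (Dconst TYPE('a) div 4)" "1 \<le> Dconst TYPE('a) div 4"
  using finite_UNIV_card_ge_0[where 'a = 'a] by (simp_all add: Dconst_def)

section \<open>The b-suffix after an increase never vanishes\<close>

context
  fixes eta :: "'a::finite gen \<times> 'a \<Rightarrow> nat"
  assumes eta: "bij_betw eta UNIV {1 .. Dconst TYPE('a) div 4}"
begin

lemma eta_range: "1 \<le> eta p" "eta p \<le> Dconst TYPE('a) div 4"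
  using eta by (auto simp: bij_betw_def)

lemma length_v_factor: "Dconst TYPE('a) + 2 * (Dconst TYPE('a) div 4) \<le> length (v_factor eta a h)"
  using eta_range[of "(fst h, a)"] Dconst_eq
  by (simp add: v_factor_def vword_eq_vblock length_vblock)

lemma bounded_cancellation_v_factor:
  assumes "h' \<noteq> inv_letter h"
  shows "bounded_cancellation (Dconst TYPE('a) div 4) (v_factor eta a h') (v_factor eta a h)"
proof -
  let ?D = "Dconst TYPE('a)" and ?k = "eta (fst h, a)" and ?k' = "eta (fst h', a)"
  have k: "1 \<le> ?k" "?k \<le> ?D div 4" "2 * ?k < ?D" "1 \<le> ?k'" "?k' \<le> ?D div 4" "2 * ?k' < ?D"
    using eta_range[of "(fst h, a)"] eta_range[of "(fst h', a)"] Dconst_eq by linarith+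
  show ?thesis
  proof (cases "snd h = snd h'")
    case True
    then show ?thesis
      using k bounded_cancellation_vblock_vblock bounded_cancellation_finv_vblock_finv_vblock
      by (auto simp: v_factor_def vword_eq_vblock)
  next
    case False
    then have "fst h' \<noteq> fst h"
      using assms by (auto simp: inv_letter_def prod_eq_iff)
    then have "?k \<noteq> ?k'"
      using eta unfolding bij_betw_def inj_on_def by (metis UNIV_I prod.inject)
    then show ?thesis
      using k False bounded_cancellation_vblock_finv_vblock bounded_cancellation_finv_vblock_vblock
      by (auto simp: v_factor_def vword_eq_vblock)
  qed
qed

lemma b_suffix_ne_Nil:
  assumes R: "reduced R" "R \<noteq> []"
  shows "b_suffix eta a s R \<noteq> []"
proof (cases s)
  case True
  let ?L = "concat (rev (map (v_factor eta a) R))"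
  have "length R * Dconst TYPE('a) \<le> length (red ?L)"
    by (rule length_red_concat_rev_map[where Q = "Dconst TYPE('a) div 4"])
      (use R(1) Dconst_eq[where 'a = 'a] length_v_factor reduced_v_factor
        bounded_cancellation_v_factor in auto)
  moreover have "length R < length R * Dconst TYPE('a)"
    using R(2) Dconst_eq[where 'a = 'a] by simp
  moreover have "length (red (finv R)) \<le> length R"
    using length_red[of "finv R"] by simp
  ultimately have "length (red (finv R)) < length (red ?L)"
    by linarith
  then have "red ?L \<noteq> red (finv R)"
    by auto
  then show ?thesis
    using True red_append_eq_Nil by (auto simp: b_suffix_def)
qed (use R in \<open>simp add: b_suffix_def red_reduced map_replicate_const\<close>)

lemma fold_apply_rule_b_word_not_snoc_A:
  assumes w: "reduced (W @ [x])" "isA x" and R: "b_word R" "reduced R" "R \<noteq> []" and y: "isA y"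
  shows "fold (apply_rule eta) R (W @ [x]) \<noteq> V @ [y]"
proof
  assume fold_eq: "fold (apply_rule eta) R (W @ [x]) = V @ [y]"
  obtain a s where x: "x = (GA a, s)"
    using w(2) unfolding isA_iff by blast
  obtain W' where "fold (apply_rule eta) R (W @ [x]) = W' @ [x] @ b_suffix eta a s R"
    using fold_apply_rule_b_word[of W a s R eta] w(1) R(1) x by blast
  then have "b_suffix eta a s R = []"
    using last_A_eq_snoc_A fold_eq y b_word_b_suffix[OF R(1)] by metis
  then show False
    using b_suffix_ne_Nil[OF R(2,3)] by blast
qed

lemma computation_no_decrease_after_increase:
  assumes ws: "is_computation eta ws hs" and hs: "reduced_history hs" and ik: "i < k" "k < length hs"
    and increase: "cntA (ws ! i) < cntA (ws ! Suc i)"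
    and flat: "\<forall>l. i < l \<and> l < k \<longrightarrow> cntA (ws ! Suc l) = cntA (ws ! l)"
  shows "cntA (ws ! k) \<le> cntA (ws ! Suc k)"
proof (rule ccontr)
  have red: "reduced (ws ! i)" "reduced (ws ! k)" "reduced (ws ! Suc i)"
    using is_computation_reduced[OF ws] ik by simp_all
  have step: "ws ! Suc i = apply_rule eta (hs ! i) (ws ! i)"
      "ws ! Suc k = apply_rule eta (hs ! k) (ws ! k)"
    using is_computation_step[OF ws] ik by simp_all
  assume "\<not> cntA (ws ! k) \<le> cntA (ws ! Suc k)"
  then obtain V where V: "ws ! k = V @ [inv_letter (hs ! k)]" "isA (hs ! k)"
    using apply_rule_decrease[OF red(2), where eta = eta and h = "hs ! k"] step(2)
    by (auto simp: not_le)
  have "cntA (ws ! i) < cntA (apply_rule eta (hs ! i) (ws ! i))"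
    using increase step(1) by simp
  then obtain W where "apply_rule eta (hs ! i) (ws ! i) = W @ [hs ! i]" "isA (hs ! i)"
    using apply_rule_increase[OF red(1)] by blast
  then have W: "ws ! Suc i = W @ [hs ! i]" "isA (hs ! i)"
    using step(1) by simp_all
  define R where "R = take (k - Suc i) (drop (Suc i) hs)"
  have "ws ! k = fold (apply_rule eta) R (W @ [hs ! i])"
    using is_computation_fold[OF ws, of "Suc i" "k - Suc i"] W ik by (simp add: R_def)
  moreover have "b_word R" "reduced R"
    using b_word_flat_segment[OF ws _ flat] hs ik
    by (simp_all add: R_def reduced_history_iff_reduced reduced_take_drop)
  moreover have "reduced (W @ [hs ! i])"
    using red(3) W(1) by simp
  ultimately have "R = []"
    using fold_apply_rule_b_word_not_snoc_A[of W "hs ! i" R "inv_letter (hs ! k)" V] W(2) V by auto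
  then have "k = Suc i"
    using ik by (simp add: R_def)
  then have "hs ! Suc i = inv_letter (hs ! i)"
    using V W by simp
  then show False
    using hs ik \<open>k = Suc i\<close> by (simp add: reduced_history_def inv_letter_def)
qed

end

theorem lemma5p8:
  fixes eta :: "'a::finite gen \<times> 'a \<Rightarrow> nat"
    and ws :: "'a letter list list" and hs :: "('a gen \<times> bool) list"
  assumes "bij_betw eta UNIV {1 .. Dconst TYPE('a) div 4}"
    and "is_computation eta ws hs"
    and "reduced_history hs"
    and "1 \<le> length hs"
    and "cntA (ws ! 0) < cntA (ws ! 1)"
  shows "\<forall>i. 1 \<le> i \<and> i \<le> length hs \<longrightarrow> cntA (ws ! (i - 1)) \<le> cntA (ws ! i)"
proof (intro allI impI)
  fix j
  assume j: "1 \<le> j \<and> j \<le> length hs"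
  define c where "c n = cntA (ws ! n)" for n
  show "cntA (ws ! (j - 1)) \<le> cntA (ws ! j)"
  proof (rule ccontr)
    assume "\<not> cntA (ws ! (j - 1)) \<le> cntA (ws ! j)"
    then have "c (Suc (j - 1)) < c (j - 1)"
      using j by (simp add: c_def)
    moreover have "c 0 < c 1"
      using assms(5) by (simp add: c_def)
    ultimately obtain i k where ik: "i < k" "k \<le> j - 1"
        and "c i < c (Suc i)" "\<forall>l. i < l \<and> l < k \<longrightarrow> c (Suc l) = c l" "c (Suc k) < c k"
      using increase_flat_decrease by blast
    moreover have "k < length hs"
      using ik(2) j by linarith
    ultimately show False
      using computation_no_decrease_after_increase[OF assms(1-3), of i k] by (simp add: c_def)
  qed
qed

end
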